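(* Let $q$ be a prime power, $n\ge k\ge0$ integers, $V_1,\dots,V_\ell$ subspaces of $\mathbb{F}_q^n$ each of dimension at most $k$, and $\delta_1,\dots,\delta_\ell\ge0$ integers. The following are equivalent: (i) for every nonempty $\Omega\subseteq[\ell]$, $\dim\big(\bigcap_{i\in\Omega}V_i\big)\le k-\sum_{i\in\Omega}\delta_i$; (ii) $\sum_{i=1}^\ell\delta_i\le k$ and the $k$-tuple $(T_1,\dots,T_k)$ consisting of $\delta_i$ copies of $V_i$ for each $i\in[\ell]$ together with $k-\sum_{i=1}^\ell\delta_i$ additional copies of $\{0\}$ is a generic kernel pattern, i.e. $\dim\big(\bigcap_{i\in\Omega'}T_i\big)\le k-|\Omega'|$ for every nonempty $\Omega'\subseteq[k]$.
   Context: The copies are counted as distinct entries of the tuple: the set of positions holding copies of $V_i$ is disjoint from the positions holding copies of any other $V_{i'}$ (even if $V_i=V_{i'}$) and from the positions of the additional copies of $\{0\}$ (even if $V_i=\{0\}$). *)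

theory Defs
  imports "HOL-Analysis.Analysis"
begin

text \<open>Vectors of F_q^n are modelled as 'a ^ 'n with 'a a finite field (q = CARD('a));
  subspaces and dimension are taken w.r.t. the library vector space structure vec
  (scalar multiplication *s) over the field 'a.\<close>

definition generic_kernel_pattern :: "nat \<Rightarrow> (nat \<Rightarrow> ('a::field ^ 'n) set) \<Rightarrow> bool" where
  "generic_kernel_pattern k T \<longleftrightarrow>
     (\<forall>\<Omega>. \<Omega> \<subseteq> {1..k} \<and> \<Omega> \<noteq> {} \<longrightarrow>
        vec.dim (\<Inter>j\<in>\<Omega>. T j) \<le> k - card \<Omega>)"

text \<open>Start offset of the block of copies of V_i: the copies of V_i occupy positions
  offset + 1 .. offset + delta i.\<close>
definition block_offset :: "(nat \<Rightarrow> nat) \<Rightarrow> nat \<Rightarrow> nat" where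
  "block_offset \<delta> i = (\<Sum>m\<in>{1..<i}. \<delta> m)"

definition kernel_tuple ::
  "(nat \<Rightarrow> ('a::field ^ 'n) set) \<Rightarrow> (nat \<Rightarrow> nat) \<Rightarrow> nat \<Rightarrow> nat \<Rightarrow> ('a ^ 'n) set" where
  "kernel_tuple V \<delta> l j =
     (if \<exists>i\<in>{1..l}. block_offset \<delta> i < j \<and> j \<le> block_offset \<delta> i + \<delta> i
      then V (THE i. i \<in> {1..l} \<and> block_offset \<delta> i < j \<and> j \<le> block_offset \<delta> i + \<delta> i)
      else {0})"

end

theory Submission
  imports Defs
begin

text \<open>The copies of \<open>V i\<close> occupy the block of positions \<open>block \<delta> i\<close>; these blocks are
  pairwise disjoint and the block of \<open>i\<close> has \<open>\<delta> i\<close> elements.  Hence a nonempty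
  \<open>\<Omega> \<subseteq> [l]\<close> yields the set of positions \<open>\<Union>i\<in>\<Omega>. block \<delta> i\<close> of cardinality
  \<open>\<Sum>i\<in>\<Omega>. \<delta> i\<close> whose intersection contains \<open>\<Inter>i\<in>\<Omega>. V i\<close>, which gives (ii) \<open>\<Longrightarrow>\<close> (i)
  (if that set of positions is empty, \<open>dim (V i) \<le> k\<close> is used instead).  Conversely, a set
  \<open>\<Omega>'\<close> of positions either meets a copy of \<open>{0}\<close>, so its intersection is trivial, or it lies
  in the blocks of the indices \<open>\<Omega>\<close> it meets; then its intersection is contained in
  \<open>\<Inter>i\<in>\<Omega>. V i\<close> while \<open>card \<Omega>' \<le> \<Sum>i\<in>\<Omega>. \<delta> i\<close>, which gives (i) \<open>\<Longrightarrow>\<close> (ii).  Only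
  monotonicity of \<open>vec.dim\<close> under inclusion is used.\<close>

definition block :: "(nat \<Rightarrow> nat) \<Rightarrow> nat \<Rightarrow> nat set" where
  "block \<delta> i = {block_offset \<delta> i <.. block_offset \<delta> i + \<delta> i}"

lemma card_block [simp]: "card (block \<delta> i) = \<delta> i"
  by (simp add: block_def)

lemma finite_block [simp]: "finite (block \<delta> i)"
  by (simp add: block_def)

lemma block_offset_Suc: "0 < i \<Longrightarrow> block_offset \<delta> (Suc i) = block_offset \<delta> i + \<delta> i"
  unfolding block_offset_def by (simp add: sum.atLeastLessThan_Suc)

lemma block_offset_mono: "i \<le> i' \<Longrightarrow> block_offset \<delta> i \<le> block_offset \<delta> i'"
  unfolding block_offset_def by (rule sum_mono2) auto

lemma block_end_le_block_offset:
  "0 < i \<Longrightarrow> i < i' \<Longrightarrow> block_offset \<delta> i + \<delta> i \<le> block_offset \<delta> i'"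
  using block_offset_Suc[of i \<delta>] block_offset_mono[of "Suc i" i' \<delta>] by simp

lemma block_subset_atLeastAtMost_sum:
  assumes "i \<in> {1..l}"
  shows "block \<delta> i \<subseteq> {1..(\<Sum>m\<in>{1..l}. \<delta> m)}"
proof -
  have "block_offset \<delta> i + \<delta> i = (\<Sum>m\<in>{1..<Suc i}. \<delta> m)"
    using block_offset_Suc[of i \<delta>] assms unfolding block_offset_def by simp
  also have "\<dots> \<le> (\<Sum>m\<in>{1..l}. \<delta> m)"
    by (rule sum_mono2) (use assms in auto)
  finally show ?thesis
    unfolding block_def by auto
qed

lemma disjoint_family_on_block: "disjoint_family_on (block \<delta>) {1..}"
  unfolding disjoint_family_on_def
proof (intro ballI impI)
  fix i i' :: nat
  assume "i \<in> {1..}" "i' \<in> {1..}" "i \<noteq> i'"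
  then consider "0 < i" "i < i'" | "0 < i'" "i' < i"
    by fastforce
  then show "block \<delta> i \<inter> block \<delta> i' = {}"
    by cases (auto simp: block_def dest: block_end_le_block_offset[of _ _ \<delta>])
qed

lemma card_UN_block:
  assumes "finite S" "S \<subseteq> {1..}"
  shows "card (\<Union>i\<in>S. block \<delta> i) = (\<Sum>i\<in>S. \<delta> i)"
  using card_UN_disjoint'[OF disjoint_family_on_mono[OF assms(2) disjoint_family_on_block]] assms(1)
  by simp

lemma kernel_tuple_block:
  assumes i: "i \<in> {1..l}" and j: "j \<in> block \<delta> i"
  shows "kernel_tuple V \<delta> l j = V i"
proof -
  have "(THE i. i \<in> {1..l} \<and> j \<in> block \<delta> i) = i"
  proof (rule the_equality)
    show "i \<in> {1..l} \<and> j \<in> block \<delta> i"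
      using i j by simp
  next
    fix i' assume "i' \<in> {1..l} \<and> j \<in> block \<delta> i'"
    with i j disjoint_family_on_block[of \<delta>] show "i' = i"
      by (auto simp: disjoint_family_on_def)
  qed
  with i j show ?thesis
    unfolding kernel_tuple_def block_def by auto
qed

lemma kernel_tuple_outside_blocks:
  "j \<notin> (\<Union>i\<in>{1..l}. block \<delta> i) \<Longrightarrow> kernel_tuple V \<delta> l j = {0}"
  unfolding kernel_tuple_def block_def by auto

lemma generic_kernel_pattern_kernel_tupleI:
  fixes V :: "nat \<Rightarrow> ('a::field ^ 'n) set"
  assumes bound: "\<And>\<Omega>. \<Omega> \<subseteq> {1..l} \<Longrightarrow> \<Omega> \<noteq> {} \<Longrightarrow> vec.dim (\<Inter>i\<in>\<Omega>. V i) + (\<Sum>i\<in>\<Omega>. \<delta> i) \<le> k"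
  shows "generic_kernel_pattern k (kernel_tuple V \<delta> l)"
  unfolding generic_kernel_pattern_def
proof (intro allI impI, elim conjE)
  fix \<Omega>' :: "nat set"
  assume \<Omega>': "\<Omega>' \<subseteq> {1..k}" "\<Omega>' \<noteq> {}"
  let ?T = "kernel_tuple V \<delta> l"
  show "vec.dim (\<Inter>j\<in>\<Omega>'. ?T j) \<le> k - card \<Omega>'"
  proof (cases "\<Omega>' \<subseteq> (\<Union>i\<in>{1..l}. block \<delta> i)")
    case False
    then have "(\<Inter>j\<in>\<Omega>'. ?T j) \<subseteq> {0}"
      using kernel_tuple_outside_blocks[where l = l and \<delta> = \<delta> and V = V] by blast
    then show ?thesis
      by (simp add: vec.dim_eq_0[THEN iffD2])
  next
    case True
    define \<Omega> where "\<Omega> = {i \<in> {1..l}. block \<delta> i \<inter> \<Omega>' \<noteq> {}}"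
    have \<Omega>: "\<Omega> \<subseteq> {1..l}" "\<Omega> \<noteq> {}" "finite \<Omega>"
      using True \<Omega>'(2) unfolding \<Omega>_def by (blast, blast, simp)
    have "(\<Inter>j\<in>\<Omega>'. ?T j) \<subseteq> (\<Inter>i\<in>\<Omega>. V i)"
      unfolding \<Omega>_def using kernel_tuple_block[of _ l _ \<delta> V] by fastforce
    then have "vec.dim (\<Inter>j\<in>\<Omega>'. ?T j) \<le> vec.dim (\<Inter>i\<in>\<Omega>. V i)"
      by (rule vec.dim_subset)
    moreover have "card \<Omega>' \<le> (\<Sum>i\<in>\<Omega>. \<delta> i)"
    proof -
      have "\<Omega>' \<subseteq> (\<Union>i\<in>\<Omega>. block \<delta> i)"
        using True unfolding \<Omega>_def by blast
      then have "card \<Omega>' \<le> card (\<Union>i\<in>\<Omega>. block \<delta> i)"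
        by (rule card_mono[rotated]) (simp add: \<Omega>(3))
      also have "\<dots> = (\<Sum>i\<in>\<Omega>. \<delta> i)"
        using \<Omega> by (intro card_UN_block) auto
      finally show ?thesis .
    qed
    moreover have "vec.dim (\<Inter>i\<in>\<Omega>. V i) + (\<Sum>i\<in>\<Omega>. \<delta> i) \<le> k"
      using bound \<Omega> by blast
    ultimately show ?thesis
      by linarith
  qed
qed

lemma dim_INT_add_sum_le_of_generic_kernel_pattern:
  fixes V :: "nat \<Rightarrow> ('a::field ^ 'n) set"
  assumes sum_le: "(\<Sum>i\<in>{1..l}. \<delta> i) \<le> k"
    and pattern: "generic_kernel_pattern k (kernel_tuple V \<delta> l)"
    and \<Omega>: "\<Omega> \<subseteq> {1..l}" "\<Omega> \<noteq> {}"
    and dim_le: "\<And>i. i \<in> \<Omega> \<Longrightarrow> vec.dim (V i) \<le> k"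
  shows "vec.dim (\<Inter>i\<in>\<Omega>. V i) + (\<Sum>i\<in>\<Omega>. \<delta> i) \<le> k"
proof -
  define \<Omega>' where "\<Omega>' = (\<Union>i\<in>\<Omega>. block \<delta> i)"
  have finite_\<Omega>: "finite \<Omega>"
    using \<Omega>(1) finite_subset by blast
  have card_\<Omega>': "card \<Omega>' = (\<Sum>i\<in>\<Omega>. \<delta> i)"
    unfolding \<Omega>'_def using \<Omega>(1) finite_\<Omega> by (intro card_UN_block) auto
  show ?thesis
  proof (cases "\<Omega>' = {}")
    case True
    obtain i where "i \<in> \<Omega>"
      using \<Omega>(2) by blast
    then have "vec.dim (\<Inter>i\<in>\<Omega>. V i) \<le> vec.dim (V i)" "vec.dim (V i) \<le> k"
      by (auto intro: vec.dim_subset dim_le)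
    with True card_\<Omega>' show ?thesis
      by simp
  next
    case False
    have "\<Omega>' \<subseteq> {1..k}"
      unfolding \<Omega>'_def using \<Omega>(1) block_subset_atLeastAtMost_sum[of _ l \<delta>] sum_le by fastforce
    with pattern False have "vec.dim (\<Inter>j\<in>\<Omega>'. kernel_tuple V \<delta> l j) \<le> k - card \<Omega>'"
      unfolding generic_kernel_pattern_def by blast
    moreover have "(\<Inter>i\<in>\<Omega>. V i) \<subseteq> (\<Inter>j\<in>\<Omega>'. kernel_tuple V \<delta> l j)"
      unfolding \<Omega>'_def using \<Omega>(1) kernel_tuple_block[of _ l _ \<delta> V] by fastforce
    then have "vec.dim (\<Inter>i\<in>\<Omega>. V i) \<le> vec.dim (\<Inter>j\<in>\<Omega>'. kernel_tuple V \<delta> l j)"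
      by (rule vec.dim_subset)
    moreover have "card \<Omega>' \<le> k"
      using card_\<Omega>' sum_le \<Omega>(1) sum_mono2[of "{1..l}" \<Omega> \<delta>] by simp
    ultimately show ?thesis
      using card_\<Omega>' by linarith
  qed
qed

theorem mainTheorem13:
  fixes V :: "nat \<Rightarrow> ('a::{finite,field} ^ 'n) set"
    and \<delta> :: "nat \<Rightarrow> nat"
    and k l :: nat
  assumes "k \<le> CARD('n)"
    and "\<And>i. i \<in> {1..l} \<Longrightarrow> vec.subspace (V i)"
    and "\<And>i. i \<in> {1..l} \<Longrightarrow> vec.dim (V i) \<le> k"
  shows "(\<forall>\<Omega>. \<Omega> \<subseteq> {1..l} \<and> \<Omega> \<noteq> {} \<longrightarrow>
            int (vec.dim (\<Inter>i\<in>\<Omega>. V i)) \<le> int k - int (\<Sum>i\<in>\<Omega>. \<delta> i))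
     \<longleftrightarrow> ((\<Sum>i\<in>{1..l}. \<delta> i) \<le> k \<and> generic_kernel_pattern k (kernel_tuple V \<delta> l))"
proof -
  have int_le_diff_iff: "int a \<le> int k - int b \<longleftrightarrow> a + b \<le> k" for a b
    by linarith
  show ?thesis
  proof
    assume "\<forall>\<Omega>. \<Omega> \<subseteq> {1..l} \<and> \<Omega> \<noteq> {} \<longrightarrow>
              int (vec.dim (\<Inter>i\<in>\<Omega>. V i)) \<le> int k - int (\<Sum>i\<in>\<Omega>. \<delta> i)"
    then have bound: "\<And>\<Omega>. \<Omega> \<subseteq> {1..l} \<Longrightarrow> \<Omega> \<noteq> {} \<Longrightarrow>
                        vec.dim (\<Inter>i\<in>\<Omega>. V i) + (\<Sum>i\<in>\<Omega>. \<delta> i) \<le> k"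
      by (metis int_le_diff_iff)
    have "(\<Sum>i\<in>{1..l}. \<delta> i) \<le> k"
      using bound[of "{1..l}"] by (cases "l = 0") auto
    with bound show "(\<Sum>i\<in>{1..l}. \<delta> i) \<le> k \<and> generic_kernel_pattern k (kernel_tuple V \<delta> l)"
      using generic_kernel_pattern_kernel_tupleI[of l V \<delta> k] by blast
  next
    assume "(\<Sum>i\<in>{1..l}. \<delta> i) \<le> k \<and> generic_kernel_pattern k (kernel_tuple V \<delta> l)"
    then have "vec.dim (\<Inter>i\<in>\<Omega>. V i) + (\<Sum>i\<in>\<Omega>. \<delta> i) \<le> k"
      if "\<Omega> \<subseteq> {1..l}" "\<Omega> \<noteq> {}" for \<Omega>
      using dim_INT_add_sum_le_of_generic_kernel_pattern[of \<delta> l k V \<Omega>] assms(3) that by blast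
    then show "\<forall>\<Omega>. \<Omega> \<subseteq> {1..l} \<and> \<Omega> \<noteq> {} \<longrightarrow>
                 int (vec.dim (\<Inter>i\<in>\<Omega>. V i)) \<le> int k - int (\<Sum>i\<in>\<Omega>. \<delta> i)"
      by (metis int_le_diff_iff)
  qed
qed

end
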